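(* Every generalized Rickart $*$-ring has a unity (multiplicative identity) element.
   Context: A $*$-ring is an associative ring $R$ (not assumed to have an identity) equipped with an involution $x\mapsto x^*$, i.e. an additive map with $(xy)^*=y^*x^*$ and $x^{**}=x$. A projection is an element $e$ with $e=e^*=e^2$. For $a\in R$, $r(a)=\{b\in R: ab=0\}$. $R$ is a generalized Rickart $*$-ring if for every $x\in R$ there exist a positive integer $n$ and a projection $g\in R$ with $r(x^n)=gR$. *)

theory Defs
  imports Main
begin

text \<open>A *-ring: an associative (not necessarily unital) ring with an involution.
  We use the type class ring (which has no multiplicative identity) and an
  explicit function star for the involution.\<close>

definition is_involution :: "('a::ring \<Rightarrow> 'a) \<Rightarrow> bool" where
  "is_involution star \<longleftrightarrow>
     (\<forall>x y. star (x + y) = star x + star y) \<and>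
     (\<forall>x y. star (x * y) = star y * star x) \<and>
     (\<forall>x. star (star x) = x)"

definition is_projection :: "('a::ring \<Rightarrow> 'a) \<Rightarrow> 'a \<Rightarrow> bool" where
  "is_projection star e \<longleftrightarrow> e = star e \<and> e = e * e"

text \<open>Positive powers in a ring without identity: rpow x n = x^(n+1).\<close>
fun rpow :: "'a::ring \<Rightarrow> nat \<Rightarrow> 'a" where
  "rpow x 0 = x"
| "rpow x (Suc n) = x * rpow x n"

definition right_ann :: "'a::ring \<Rightarrow> 'a set" where
  "right_ann a = {b. a * b = 0}"

definition principal_right_ideal :: "'a::ring \<Rightarrow> 'a set" where
  "principal_right_ideal g = {g * r | r. True}"

definition generalized_rickart :: "('a::ring \<Rightarrow> 'a) \<Rightarrow> bool" where
  "generalized_rickart star \<longleftrightarrow>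
     is_involution star \<and>
     (\<forall>x. \<exists>n::nat. n > 0 \<and> (\<exists>g. is_projection star g \<and>
          right_ann (rpow x (n - 1)) = principal_right_ideal g))"

end

theory Submission
  imports Defs
begin

text \<open>Apply the defining property to x = 0: every power of 0 is 0, whose right annihilator
  is the whole ring, so R = gR for a projection g. Idempotence makes g a left identity, and
  applying the involution to g (star x) = star x makes the self-adjoint g a right identity.\<close>

lemma rpow_zero [simp]: "rpow (0::'a::ring) k = 0"
  by (cases k) simp_all

lemma right_ann_zero [simp]: "right_ann (0::'a::ring) = UNIV"
  by (simp add: right_ann_def)

lemma left_identity_if_principal_right_ideal_UNIV:
  fixes g :: "'a::ring"
  assumes "g = g * g" and "principal_right_ideal g = UNIV"
  shows "g * x = x"
proof -
  obtain r where "x = g * r"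
    using assms(2) unfolding principal_right_ideal_def by blast
  then show ?thesis
    using assms(1) by (metis mult.assoc)
qed

lemma right_identity_if_selfadjoint_left_identity:
  fixes star :: "'a::ring \<Rightarrow> 'a"
  assumes "is_involution star" and "g = star g" and "\<And>y. g * y = y"
  shows "x * g = x"
proof -
  have "x * g = star (g * star x)"
    using assms(1,2) unfolding is_involution_def by metis
  also have "\<dots> = x"
    using assms(1,3) unfolding is_involution_def by simp
  finally show ?thesis .
qed

theorem mainTheorem1:
  fixes star :: "'a::ring \<Rightarrow> 'a"
  assumes "generalized_rickart star"
  shows "\<exists>u::'a. \<forall>x. u * x = x \<and> x * u = x"
proof -
  have involution: "is_involution star"
    using assms unfolding generalized_rickart_def by blast
  obtain n g where "is_projection star g"
    and "right_ann (rpow (0::'a) (n - 1)) = principal_right_ideal g"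
    using assms unfolding generalized_rickart_def by blast
  then have "g = star g" and idempotent: "g = g * g"
    and generates: "principal_right_ideal g = UNIV"
    unfolding is_projection_def by simp_all
  have left: "g * x = x" for x
    using idempotent generates by (rule left_identity_if_principal_right_ideal_UNIV)
  have "x * g = x" for x
    using involution \<open>g = star g\<close> left by (rule right_identity_if_selfadjoint_left_identity)
  with left show ?thesis
    by blast
qed

end
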